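(* Let $H=(V,E)$ be a geometric hypergraph on points in the plane, i.e., $V$ is a finite set of points in $\mathbb{R}^2$ and $E$ is a family of subsets of $V$, where every edge $A\in E$ has $|A|\ge 2$. Then $H$ admits a separating cycle if and only if $H$ is $2$-colorable.
   Context: A hypergraph $H=(V,E)$ is $2$-colorable if there is a coloring of $V$ with two colors such that no edge $A\in E$ is monochromatic. For a simple closed polygonal curve $C$ in the plane, let $\mathring{C}$, $\partial C$, $\overline{C}$ denote its interior, boundary and exterior. A polygonal cycle $C$ is a separating cycle for $H$ if (i) $C$ is simple (no self-intersections) and (ii) for each edge $A\in E$, both $A\cap(\mathring{C}\cup\partial C)$ and $A\cap\overline{C}$ are nonempty. *)

theory Defs
  imports "HOL-Analysis.Analysis"
begin

fun polygonal_path :: "(real^2) list \<Rightarrow> real \<Rightarrow> real^2" where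
  "polygonal_path [] = linepath 0 0"
| "polygonal_path [a] = linepath a a"
| "polygonal_path [a, b] = linepath a b"
| "polygonal_path (a # b # xs) = linepath a b +++ polygonal_path (b # xs)"

definition polygon_cycle :: "(real^2) list \<Rightarrow> real \<Rightarrow> real^2" where
  "polygon_cycle ps = polygonal_path (ps @ [hd ps])"

definition two_colorable :: "'a set \<Rightarrow> 'a set set \<Rightarrow> bool" where
  "two_colorable V E \<longleftrightarrow>
     (\<exists>c :: 'a \<Rightarrow> bool. \<forall>A\<in>E. \<exists>x\<in>A. \<exists>y\<in>A. c x \<noteq> c y)"

definition separating_cycle :: "(real^2) set set \<Rightarrow> (real \<Rightarrow> real^2) \<Rightarrow> bool" where
  "separating_cycle E C \<longleftrightarrow>
     (\<exists>ps. C = polygon_cycle ps) \<and> simple_path C \<and>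
     (\<forall>A\<in>E. A \<inter> (inside (path_image C) \<union> path_image C) \<noteq> {}
            \<and> A \<inter> outside (path_image C) \<noteq> {})"

end

theory Submission
  imports Defs
begin

(* A separating cycle 2-colours the vertices: inside-or-on versus outside.
   Conversely, given the red vertices R, shear the plane so that all vertices get distinct
   abscissae, and take a comb-shaped polygon: a spine below all vertices carrying, for every
   red vertex r, a spike of small width with apex r, closed by a bottom edge further down.
   Spine and spikes form a path whose abscissa is strictly increasing, hence an arc, and the
   bottom edge meets it only at its ends, so the polygon is simple.  Red vertices lie on it,
   while the (sheared) vertical ray above a blue vertex runs between the spikes, so every blue
   vertex lies in the unbounded component of the complement. *)

lemma linear_vec_nth: "linear (\<lambda>p :: real^'n. p $ i)"
  using bounded_linear_vec_nth by (rule bounded_linear.linear)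

lemma linear_closed_segment_mem:
  fixes f :: "'a::real_vector \<Rightarrow> real"
  assumes "linear f" "q \<in> closed_segment a b"
  shows "f q \<in> closed_segment (f a) (f b)"
  using assms by (simp add: closed_segment_linear_image)

lemma closed_segment_linear_le_imp_start:
  fixes f :: "'a::real_vector \<Rightarrow> real"
  assumes "linear f" "q \<in> closed_segment a b" "f a < f b" "f q \<le> f a"
  shows "q = a"
proof -
  obtain t where t: "0 \<le> t" "q = (1 - t) *\<^sub>R a + t *\<^sub>R b"
    using assms(2) by (auto simp: closed_segment_def)
  have "f q = f a + t * (f b - f a)"
    unfolding t(2) by (simp only: linear_add[OF assms(1)] linear_scale[OF assms(1)]) (simp add: algebra_simps)
  then have "t = 0"
    using t(1) assms(3,4) by (smt (verit) mult_pos_pos)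
  then show ?thesis using t(2) by simp
qed

lemma outside_if_ray_disjoint:
  fixes S :: "'a::real_normed_vector set"
  assumes "w \<noteq> 0" "\<And>t. 0 \<le> t \<Longrightarrow> b + t *\<^sub>R w \<notin> S"
  shows "b \<in> outside S"
proof -
  define ray where "ray = (\<lambda>t. b + t *\<^sub>R w) ` {0..}"
  have "connected ray"
    unfolding ray_def by (intro connected_continuous_image continuous_intros) auto
  moreover have "b \<in> ray" "ray \<subseteq> - S"
    using assms(2) by (force simp: ray_def)+
  ultimately have "ray \<subseteq> connected_component_set (- S) b"
    by (intro connected_component_maximal)
  moreover have "\<not> bounded ray"
  proof
    assume "bounded ray"
    then obtain B where B: "\<And>x. x \<in> ray \<Longrightarrow> norm x \<le> B"
      by (auto simp: bounded_iff)
    define t where "t = (B + norm b + 1) / norm w"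
    have "0 \<le> B"
      using B[of b] \<open>b \<in> ray\<close> norm_ge_zero order_trans by blast
    then have "0 \<le> t" "t * norm w = B + norm b + 1"
      using assms(1) by (auto simp: t_def)
    moreover have "t * norm w - norm b \<le> norm (b + t *\<^sub>R w)"
      using norm_triangle_ineq2[of "t *\<^sub>R w" "- b"] \<open>0 \<le> t\<close> by (simp add: add.commute)
    ultimately show False
      using B[of "b + t *\<^sub>R w"] by (auto simp: ray_def)
  qed
  ultimately show ?thesis
    by (auto simp: outside dest: bounded_subset)
qed

lemma polygonal_path_Cons2:
  "xs \<noteq> [] \<Longrightarrow> polygonal_path (a # b # xs) = linepath a b +++ polygonal_path (b # xs)"
  by (cases xs) auto

lemma pathstart_polygonal_path [simp]: "pathstart (polygonal_path (a # xs)) = a"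
  by (cases xs rule: polygonal_path.cases) auto

lemma pathfinish_polygonal_path: "l \<noteq> [] \<Longrightarrow> pathfinish (polygonal_path l) = last l"
  by (induction l rule: polygonal_path.induct) auto

lemma path_image_polygonal_path_Cons2:
  "path_image (polygonal_path (a # b # xs)) = closed_segment a b \<union> path_image (polygonal_path (b # xs))"
  by (cases "xs = []") (auto simp: polygonal_path_Cons2 path_image_join)

lemma path_image_polygonal_path_snoc:
  "l \<noteq> [] \<Longrightarrow>
   path_image (polygonal_path (l @ [b])) = path_image (polygonal_path l) \<union> closed_segment (last l) b"
  by (induction l rule: polygonal_path.induct) (auto simp: path_image_join)

lemma set_subset_path_image_polygonal_path: "set l \<subseteq> path_image (polygonal_path l)"
  by (induction l rule: polygonal_path.induct) (auto simp: path_image_join)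

lemma path_image_polygonal_path_subset_convex:
  "convex K \<Longrightarrow> l \<noteq> [] \<Longrightarrow> set l \<subseteq> K \<Longrightarrow> path_image (polygonal_path l) \<subseteq> K"
  by (induction l rule: polygonal_path.induct)
     (auto simp: path_image_join closed_segment_subset)

lemma path_image_polygonal_path_monotone:
  fixes f :: "real^2 \<Rightarrow> real"
  assumes "linear f" "sorted_wrt (\<lambda>p q. f p < f q) (a # l)"
  shows "path_image (polygonal_path (a # l)) \<subseteq> insert a {q. f a < f q}"
  using assms(2)
proof (induction l arbitrary: a)
  case (Cons b l)
  have "closed_segment a b \<subseteq> insert a {q. f a < f q}"
    using closed_segment_linear_le_imp_start[OF assms(1)] Cons.prems by force
  moreover have "path_image (polygonal_path (b # l)) \<subseteq> insert a {q. f a < f q}"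
    using Cons by force
  ultimately show ?case
    by (simp add: path_image_polygonal_path_Cons2)
qed simp

lemma arc_polygonal_path_monotone:
  fixes f :: "real^2 \<Rightarrow> real"
  assumes "linear f" "sorted_wrt (\<lambda>p q. f p < f q) (a # b # l)"
  shows "arc (polygonal_path (a # b # l))"
  using assms(2)
proof (induction l arbitrary: a b)
  case Nil
  then have "a \<noteq> b"
    by auto
  then show ?case
    by simp
next
  case (Cons c l)
  have "closed_segment a b \<inter> path_image (polygonal_path (b # c # l)) \<subseteq> {b}"
  proof
    fix q assume q: "q \<in> closed_segment a b \<inter> path_image (polygonal_path (b # c # l))"
    then have "f q \<le> f b"
      using linear_closed_segment_mem[OF assms(1)] Cons.prems
      by (fastforce simp: closed_segment_eq_real_ivl)
    then show "q \<in> {b}"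
      using q path_image_polygonal_path_monotone[OF assms(1), of b "c # l"] Cons.prems by auto
  qed
  moreover have "a \<noteq> b"
    using Cons.prems by auto
  ultimately show ?case
    using Cons by (simp add: polygonal_path_Cons2 arc_join_eq)
qed

lemma polygonal_path_above_level_except_ends:
  fixes g :: "real^2 \<Rightarrow> real"
  assumes "linear g" "l \<noteq> []" "g a = c" "g b = c" "\<forall>v\<in>set l. c < g v"
    and "q \<in> path_image (polygonal_path (a # l @ [b]))" "g q \<le> c"
  shows "q = a \<or> q = b"
proof -
  have hd: "c < g (hd l)" and last: "c < g (last l)"
    using assms(2,5) by auto
  have "path_image (polygonal_path l) \<subseteq> g -` {c<..}"
    using assms(5) by (intro path_image_polygonal_path_subset_convex convex_linear_vimage assms(1,2)) auto
  moreover have "path_image (polygonal_path (a # l @ [b])) =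
      closed_segment a (hd l) \<union> path_image (polygonal_path l) \<union> closed_segment (last l) b"
    using assms(2) path_image_polygonal_path_snoc[of "a # l" b]
    by (cases l) (auto simp: path_image_polygonal_path_Cons2)
  ultimately show ?thesis
    using assms(3,4,6,7) hd last closed_segment_linear_le_imp_start[OF assms(1)]
    by (fastforce simp: closed_segment_commute)
qed

lemma simple_path_polygon_cycle_monotone:
  fixes f g :: "real^2 \<Rightarrow> real"
  assumes "linear f" "linear g" "sorted_wrt (\<lambda>p q. f p < f q) (a # l @ [b])" "l \<noteq> []"
    and "g a = c" "g b = c" "\<forall>v\<in>set l. c < g v"
  shows "simple_path (polygon_cycle (b # a # l))"
proof -
  obtain x l' where l: "l = x # l'"
    using assms(4) by (cases l) auto
  have "a \<noteq> b"
    using assms(3) by auto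
  moreover have "arc (polygonal_path (a # l @ [b]))"
    using arc_polygonal_path_monotone[OF assms(1)] assms(3) l by auto
  moreover have "closed_segment b a \<inter> path_image (polygonal_path (a # l @ [b])) \<subseteq> {b, a}"
  proof
    fix q assume q: "q \<in> closed_segment b a \<inter> path_image (polygonal_path (a # l @ [b]))"
    then have "g q = c"
      using linear_closed_segment_mem[OF assms(2), of q b a] assms(5,6) by simp
    then show "q \<in> {b, a}"
      using polygonal_path_above_level_except_ends[OF assms(2,4,5,6,7)] q by auto
  qed
  ultimately have "simple_path (linepath b a +++ polygonal_path (a # l @ [b]))"
    by (intro simple_path_join_loop) (auto simp: pathfinish_polygonal_path)
  then show ?thesis
    by (simp add: polygon_cycle_def polygonal_path_Cons2)
qed

(* Coordinates with respect to the axes (1, 0) and (-s, 1); a generic slope s separates the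
   abscissae of finitely many points. *)
definition skew_abscissa :: "real \<Rightarrow> real^2 \<Rightarrow> real" where
  "skew_abscissa s p = p$1 + s * p$2"

definition skew_point :: "real \<Rightarrow> real \<Rightarrow> real \<Rightarrow> real^2" where
  "skew_point s x y = (\<chi> i. if i = 1 then x - s * y else y)"

lemma skew_point_simps [simp]:
  "skew_point s x y $ 1 = x - s * y" "skew_point s x y $ 2 = y" "skew_abscissa s (skew_point s x y) = x"
  by (auto simp: skew_point_def skew_abscissa_def)

lemma linear_skew_abscissa: "linear (skew_abscissa s)"
  by (auto intro!: linearI simp: skew_abscissa_def algebra_simps)

lemma finite_imp_inj_on_skew_abscissa:
  assumes "finite V"
  obtains s where "inj_on (skew_abscissa s) V"
proof -
  let ?slopes = "(\<lambda>(p, q). (q$1 - p$1) / (p$2 - q$2)) ` (V \<times> V)"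
  have "finite ?slopes"
    using assms by simp
  then obtain s where s: "s \<notin> ?slopes"
    using ex_new_if_finite[OF infinite_UNIV_char_0] by blast
  have "p = q" if "p \<in> V" "q \<in> V" "skew_abscissa s p = skew_abscissa s q" for p q
  proof (cases "p$2 = q$2")
    case True
    then show ?thesis
      using that(3) by (simp add: vec_eq_iff forall_2 skew_abscissa_def)
  next
    case False
    then have "s = (q$1 - p$1) / (p$2 - q$2)"
      using that(3) by (simp add: skew_abscissa_def field_simps)
    then show ?thesis
      using s that(1,2) by force
  qed
  then show ?thesis
    by (intro that inj_onI) auto
qed

lemma finite_inj_on_imp_separated:
  fixes f :: "'a \<Rightarrow> real"
  assumes "finite V" "inj_on f V"
  obtains e where "0 < e" "\<And>v w. v \<in> V \<Longrightarrow> w \<in> V \<Longrightarrow> v \<noteq> w \<Longrightarrow> 2 * e < \<bar>f v - f w\<bar>"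
proof
  define D where "D = (\<lambda>(v, w). \<bar>f v - f w\<bar>) ` {(v, w) \<in> V \<times> V. v \<noteq> w}"
  have "{(v, w) \<in> V \<times> V. v \<noteq> w} \<subseteq> V \<times> V"
    by blast
  then have D: "finite D" "\<forall>d\<in>D. 0 < d"
    using assms by (auto simp: D_def inj_on_def dest: finite_subset)
  show "0 < Min (insert 1 D) / 3"
    using D by simp
  fix v w assume "v \<in> V" "w \<in> V" "v \<noteq> w"
  then have "\<bar>f v - f w\<bar> \<in> D"
    by (force simp: D_def)
  then have "Min (insert 1 D) \<le> \<bar>f v - f w\<bar>"
    using D(1) by (intro Min_le) auto
  moreover have "0 < Min (insert 1 D)"
    using D by simp
  ultimately show "2 * (Min (insert 1 D) / 3) < \<bar>f v - f w\<bar>"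
    by linarith
qed

lemma sorted_list_of_separated_set:
  fixes f :: "'a \<Rightarrow> real"
  assumes "finite R" "0 \<le> e" "\<And>v w. v \<in> R \<Longrightarrow> w \<in> R \<Longrightarrow> v \<noteq> w \<Longrightarrow> 2 * e < \<bar>f v - f w\<bar>"
  obtains rs where "set rs = R" "sorted_wrt (\<lambda>p q. f p + 2 * e < f q) rs"
proof -
  have "inj_on f R"
    using assms(2,3) by (fastforce intro: inj_onI)
  then have "folding_insort_key (\<le>) (<) R f"
    by unfold_locales
  then obtain rs where rs: "sorted_wrt (<) (map f rs)" "set rs = R"
    using folding_insort_key.finite_set_strict_sorted[OF _ subset_refl assms(1)] by metis
  have "sorted_wrt (\<lambda>p q. f p + 2 * e < f q) rs"
  proof (rule sorted_wrt_mono_rel[of _ "\<lambda>p q. f p < f q"])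
    fix p q assume "p \<in> set rs" "q \<in> set rs" "f p < f q"
    then show "f p + 2 * e < f q"
      using assms(3)[of p q] rs(2) by fastforce
  qed (use rs(1) in \<open>simp add: sorted_wrt_map\<close>)
  then show thesis
    using that rs(2) by blast
qed

fun spikes :: "real \<Rightarrow> real \<Rightarrow> real \<Rightarrow> (real^2) list \<Rightarrow> (real^2) list" where
  "spikes s e h [] = []"
| "spikes s e h (r # rs) =
     skew_point s (skew_abscissa s r - e) h # r # skew_point s (skew_abscissa s r + e) h # spikes s e h rs"

lemma set_subset_spikes: "set rs \<subseteq> set (spikes s e h rs)"
  by (induction rs) auto

lemma spikes_near:
  "0 \<le> e \<Longrightarrow> v \<in> set (spikes s e h rs) \<Longrightarrow>
   \<exists>r\<in>set rs. \<bar>skew_abscissa s v - skew_abscissa s r\<bar> \<le> e"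
  by (induction rs) auto

lemma spikes_height: "\<forall>r\<in>set rs. h \<le> r$2 \<Longrightarrow> v \<in> set (spikes s e h rs) \<Longrightarrow> h \<le> v$2"
  by (induction rs) auto

lemma sorted_spikes:
  assumes "0 < e" "sorted_wrt (\<lambda>p q. skew_abscissa s p + 2 * e < skew_abscissa s q) rs"
  shows "sorted_wrt (\<lambda>p q. skew_abscissa s p < skew_abscissa s q) (spikes s e h rs)"
  using assms(2)
proof (induction rs)
  case (Cons r rs)
  have near: "skew_abscissa s r + e < skew_abscissa s v" if "v \<in> set (spikes s e h rs)" for v
    using spikes_near[OF _ that] assms(1) Cons.prems by fastforce
  then show ?case
    using Cons assms(1) by (fastforce dest: near)
qed simp

lemma path_image_spikes:
  assumes "0 \<le> e" "c$2 \<le> h" "\<forall>v\<in>set t. v$2 \<le> h"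
  shows "path_image (polygonal_path (c # spikes s e h rs @ t)) \<subseteq>
    {q. q$2 \<le> h} \<union> {q. \<exists>r\<in>set rs. \<bar>skew_abscissa s q - skew_abscissa s r\<bar> \<le> e}"
proof -
  have halfplane: "convex {q :: real^2. q$2 \<le> h}"
    using convex_linear_vimage[OF linear_vec_nth, of "{..h}" 2] by (simp add: vimage_def)
  have strip: "convex {q. \<bar>skew_abscissa s q - x\<bar> \<le> e}" for x
    using convex_linear_vimage[OF linear_skew_abscissa, of "{x - e .. x + e}" s]
    by (simp add: vimage_def abs_le_iff algebra_simps conj_commute)
  show ?thesis
    using assms(2)
  proof (induction rs arbitrary: c)
    case Nil
    then show ?case
      using path_image_polygonal_path_subset_convex[OF halfplane, of "c # t"] assms(3) by auto
  next
    case (Cons r rs)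
    let ?b1 = "skew_point s (skew_abscissa s r - e) h" and ?b2 = "skew_point s (skew_abscissa s r + e) h"
    have "closed_segment c ?b1 \<subseteq> {q. q$2 \<le> h}"
      using halfplane Cons.prems by (simp add: closed_segment_subset)
    moreover have "closed_segment ?b1 r \<union> closed_segment r ?b2 \<subseteq>
        {q. \<bar>skew_abscissa s q - skew_abscissa s r\<bar> \<le> e}"
      using strip assms(1) by (simp add: closed_segment_subset)
    moreover have "path_image (polygonal_path (?b2 # spikes s e h rs @ t)) \<subseteq>
        {q. q$2 \<le> h} \<union> {q. \<exists>r\<in>set rs. \<bar>skew_abscissa s q - skew_abscissa s r\<bar> \<le> e}"
      by (rule Cons.IH) simp
    moreover have "path_image (polygonal_path (c # spikes s e h (r # rs) @ t)) =
        closed_segment c ?b1 \<union> (closed_segment ?b1 r \<union> closed_segment r ?b2) \<union>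
        path_image (polygonal_path (?b2 # spikes s e h rs @ t))"
      by (simp only: spikes.simps append_Cons path_image_polygonal_path_Cons2 Un_assoc)
    ultimately show ?case
      by auto
  qed
qed

definition comb_polygon :: "real \<Rightarrow> real \<Rightarrow> real \<Rightarrow> real \<Rightarrow> (real^2) list \<Rightarrow> (real^2) list" where
  "comb_polygon s e h M rs =
     skew_point s (M + 1) (h - 1) # skew_point s (- M) (h - 1) # spikes s e h rs @ [skew_point s M h]"

lemma simple_path_comb_polygon:
  assumes "0 < e" "sorted_wrt (\<lambda>p q. skew_abscissa s p + 2 * e < skew_abscissa s q) rs"
    and "0 < M" "\<forall>r\<in>set rs. h \<le> r$2 \<and> \<bar>skew_abscissa s r\<bar> + e < M"
  shows "simple_path (polygon_cycle (comb_polygon s e h M rs))"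
  unfolding comb_polygon_def
proof (rule simple_path_polygon_cycle_monotone[OF linear_skew_abscissa linear_vec_nth])
  have bound: "- M < skew_abscissa s v \<and> skew_abscissa s v < M" if "v \<in> set (spikes s e h rs)" for v
    using spikes_near[OF _ that] assms(1,4) by fastforce
  then show "sorted_wrt (\<lambda>p q. skew_abscissa s p < skew_abscissa s q)
      (skew_point s (- M) (h - 1) # (spikes s e h rs @ [skew_point s M h]) @ [skew_point s (M + 1) (h - 1)])"
    using sorted_spikes[OF assms(1,2), of h] assms(3)
    by (force simp: sorted_wrt_append dest: bound)
  show "\<forall>v\<in>set (spikes s e h rs @ [skew_point s M h]). h - 1 < v$2"
    using spikes_height[of rs h] assms(4) by fastforce
qed auto

lemma set_subset_path_image_comb_polygon:
  "set rs \<subseteq> path_image (polygon_cycle (comb_polygon s e h M rs))"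
  using set_subset_spikes[of rs] set_subset_path_image_polygonal_path
  by (fastforce simp: comb_polygon_def polygon_cycle_def)

lemma path_image_comb_polygon:
  assumes "0 \<le> e"
  shows "path_image (polygon_cycle (comb_polygon s e h M rs)) \<subseteq>
    {q. q$2 \<le> h} \<union> {q. \<exists>r\<in>set rs. \<bar>skew_abscissa s q - skew_abscissa s r\<bar> \<le> e}"
proof -
  let ?a = "skew_point s (- M) (h - 1)" and ?b = "skew_point s (M + 1) (h - 1)"
  have "closed_segment ?b ?a \<subseteq> {q. q$2 \<le> h}"
  proof
    fix q assume "q \<in> closed_segment ?b ?a"
    then have "q$2 = h - 1"
      using linear_closed_segment_mem[OF linear_vec_nth, of q ?b ?a 2] by simp
    then show "q \<in> {q. q$2 \<le> h}"
      by simp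
  qed
  moreover have "path_image (polygonal_path (?a # spikes s e h rs @ [skew_point s M h, ?b])) \<subseteq>
      {q. q$2 \<le> h} \<union> {q. \<exists>r\<in>set rs. \<bar>skew_abscissa s q - skew_abscissa s r\<bar> \<le> e}"
    using assms by (intro path_image_spikes) auto
  ultimately show ?thesis
    by (auto simp: comb_polygon_def polygon_cycle_def path_image_polygonal_path_Cons2)
qed

lemma outside_comb_polygon:
  assumes "0 \<le> e" "h < b$2" "\<forall>r\<in>set rs. e < \<bar>skew_abscissa s b - skew_abscissa s r\<bar>"
  shows "b \<in> outside (path_image (polygon_cycle (comb_polygon s e h M rs)))"
proof (rule outside_if_ray_disjoint)
  show "skew_point s 0 1 \<noteq> 0"
    by (metis skew_point_simps(2) zero_index zero_neq_one)
  fix t :: real assume "0 \<le> t"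
  then have "h < (b + t *\<^sub>R skew_point s 0 1)$2"
    "skew_abscissa s (b + t *\<^sub>R skew_point s 0 1) = skew_abscissa s b"
    using assms(2) linear_skew_abscissa[of s] by (simp_all add: linear_add linear_scale)
  then show "b + t *\<^sub>R skew_point s 0 1 \<notin> path_image (polygon_cycle (comb_polygon s e h M rs))"
    using path_image_comb_polygon[OF assms(1)] assms(3) by fastforce
qed

lemma simple_polygon_through_and_around:
  fixes V R :: "(real^2) set"
  assumes "finite V" "R \<subseteq> V"
  obtains ps where "simple_path (polygon_cycle ps)" "R \<subseteq> path_image (polygon_cycle ps)"
    "V - R \<subseteq> outside (path_image (polygon_cycle ps))"
proof -
  obtain s where inj: "inj_on (skew_abscissa s) V"
    using finite_imp_inj_on_skew_abscissa[OF assms(1)] .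
  let ?f = "skew_abscissa s"
  obtain e where e: "0 < e" "\<And>v w. v \<in> V \<Longrightarrow> w \<in> V \<Longrightarrow> v \<noteq> w \<Longrightarrow> 2 * e < \<bar>?f v - ?f w\<bar>"
    using finite_inj_on_imp_separated[OF assms(1) inj] by blast
  have "bounded ((\<lambda>v. v$2) ` V \<union> ?f ` V)"
    using assms(1) by (simp add: finite_imp_bounded)
  then obtain B where B: "\<And>v. v \<in> V \<Longrightarrow> \<bar>v$2\<bar> \<le> B \<and> \<bar>?f v\<bar> \<le> B"
    by (auto simp: bounded_real)
  obtain rs where rs: "set rs = R" "sorted_wrt (\<lambda>p q. ?f p + 2 * e < ?f q) rs"
    using finite_subset[OF assms(2,1)] e assms(2)
    by (elim sorted_list_of_separated_set[where f = ?f and e = e]) (auto simp: subset_iff)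
  define ps where "ps = comb_polygon s e (- \<bar>B\<bar> - 1) (\<bar>B\<bar> + e + 1) rs"
  show thesis
  proof (rule that[of ps])
    show "simple_path (polygon_cycle ps)"
      unfolding ps_def
    proof (rule simple_path_comb_polygon[OF e(1) rs(2)])
      show "0 < \<bar>B\<bar> + e + 1"
        using e(1) by simp
      show "\<forall>r\<in>set rs. - \<bar>B\<bar> - 1 \<le> r$2 \<and> \<bar>?f r\<bar> + e < \<bar>B\<bar> + e + 1"
        using B rs(1) assms(2) by fastforce
    qed
    show "R \<subseteq> path_image (polygon_cycle ps)"
      unfolding ps_def using set_subset_path_image_comb_polygon rs(1) by blast
    show "V - R \<subseteq> outside (path_image (polygon_cycle ps))"
    proof
      fix b assume b: "b \<in> V - R"
      then have "e < \<bar>?f b - ?f r\<bar>" if "r \<in> set rs" for r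
        using e that rs(1) assms(2) by fastforce
      then show "b \<in> outside (path_image (polygon_cycle ps))"
        unfolding ps_def using e(1) B[of b] b by (intro outside_comb_polygon) auto
    qed
  qed
qed

lemma two_colorable_if_separating_cycle:
  assumes "separating_cycle E C"
  shows "two_colorable V E"
  unfolding two_colorable_def
proof (intro exI ballI)
  fix A assume "A \<in> E"
  then obtain x y where "x \<in> A" "x \<in> inside (path_image C) \<union> path_image C"
    "y \<in> A" "y \<in> outside (path_image C)"
    using assms unfolding separating_cycle_def by blast
  then show "\<exists>x\<in>A. \<exists>y\<in>A. (x \<in> outside (path_image C)) \<noteq> (y \<in> outside (path_image C))"
    using inside_Int_outside outside_no_overlap by blast
qed

lemma separating_cycle_if_two_colorable:
  fixes V :: "(real^2) set"
  assumes "finite V" "\<forall>A\<in>E. A \<subseteq> V" "two_colorable V E"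
  shows "\<exists>C. separating_cycle E C"
proof -
  obtain c :: "real^2 \<Rightarrow> bool" where c: "\<forall>A\<in>E. \<exists>x\<in>A. \<exists>y\<in>A. c x \<noteq> c y"
    using assms(3) unfolding two_colorable_def by blast
  obtain ps where ps: "simple_path (polygon_cycle ps)" "{v \<in> V. c v} \<subseteq> path_image (polygon_cycle ps)"
    "V - {v \<in> V. c v} \<subseteq> outside (path_image (polygon_cycle ps))"
    using simple_polygon_through_and_around[OF assms(1), of "{v \<in> V. c v}"] by blast
  have "separating_cycle E (polygon_cycle ps)"
    unfolding separating_cycle_def
  proof (intro conjI ballI exI)
    fix A assume "A \<in> E"
    then obtain x y where "x \<in> A" "y \<in> A" "c x" "\<not> c y"
      using c by metis
    with ps(2,3) assms(2) \<open>A \<in> E\<close> show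
      "A \<inter> (inside (path_image (polygon_cycle ps)) \<union> path_image (polygon_cycle ps)) \<noteq> {}"
      "A \<inter> outside (path_image (polygon_cycle ps)) \<noteq> {}"
      by blast+
  qed (use ps(1) in auto)
  then show ?thesis
    by blast
qed

theorem theorem1:
  fixes V :: "(real^2) set" and E :: "(real^2) set set"
  assumes "finite V"
    and "\<forall>A\<in>E. A \<subseteq> V \<and> card A \<ge> 2"
  shows "(\<exists>C. separating_cycle E C) \<longleftrightarrow> two_colorable V E"
proof
  assume "\<exists>C. separating_cycle E C"
  then show "two_colorable V E"
    using two_colorable_if_separating_cycle by blast
next
  assume "two_colorable V E"
  then show "\<exists>C. separating_cycle E C"
    using separating_cycle_if_two_colorable assms by blast
qed

end
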